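(* Let $\lambda\in\mathbf{R}$ and $c>0$. Then there exists an integer $l\geq 0$ such that for every $f\in\mathcal{C}^{\lambda\text{-an}}(\mathbf{Z}_p^d,M)$ and every $1\leq i\leq d$ we have $\Delta_{p^l1_i}(f)\in\mathcal{C}^{\lambda\text{-an}}(\mathbf{Z}_p^d,M)$ and $$\mathrm{val}_{\lambda}(\Delta_{p^l 1_i}(f))\geq \mathrm{val}_{\lambda}(f)+c.$$
   Context: A valuation on a ring (or module) is a map $\mathrm{val}$ to $(-\infty,\infty]$ with $\mathrm{val}(x)=\infty$ iff $x=0$, $\mathrm{val}(xy)\geq\mathrm{val}(x)+\mathrm{val}(y)$ (for modules: $\mathrm{val}(rm)\geq \mathrm{val}(r)+\mathrm{val}(m)$) and $\mathrm{val}(x+y)\geq\min(\mathrm{val}(x),\mathrm{val}(y))$. Let $R$ be a $\mathbf{Z}_p$-algebra which is a Tate ring with a valuation $\mathrm{val}_R$ such that $\mathrm{val}_R(p)>0$, and let $M$ be an $R$-module with a compatible valuation $\mathrm{val}_M$. For $\underline{y}\in\mathbf{Z}_p^d$ and $f:\mathbf{Z}_p^d\to M$ put $\Delta_{\underline{y}}(f)(\underline{x})=f(\underline{x}+\underline{y})-f(\underline{x})$. Let $1_i\in\mathbf{Z}_p^d$ be the $i$-th standard basis vector, $\Delta_i=\Delta_{1_i}$, and for $\underline{n}\in\mathbf{Z}_{\geq0}^d$ put $\Delta^{\underline{n}}=\Delta_1^{n_1}\circ\cdots\circ\Delta_d^{n_d}$ and $a_{\underline{n}}(f)=\Delta^{\underline{n}}(f)(\underline{0})$.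 Write $|\underline{n}|=\sum_i n_i$ and $\lfloor p^\lambda\underline{n}\rfloor=\sum_i\lfloor p^\lambda n_i\rfloor$. Let $\mathcal{C}^{\lambda\text{-an}}(\mathbf{Z}_p^d,M)$ be the set of continuous $f:\mathbf{Z}_p^d\to M$ such that $\mathrm{val}_M(a_{\underline{n}}(f))-p^\lambda|\underline{n}|\to\infty$ as $|\underline{n}|\to\infty$, endowed with the valuation $\mathrm{val}_\lambda(f)=\inf_{\underline{n}}\big(\mathrm{val}_M(a_{\underline{n}}(f))-\lfloor p^\lambda\underline{n}\rfloor\big)$. *)

theory Defs
  imports "HOL-Analysis.Analysis"
begin

text \<open>An element x of Z_p is represented by the sequence of its residues x n in {0..<p^n}
  modulo p^n, compatible under reduction.\<close>

definition Zp :: "nat \<Rightarrow> (nat \<Rightarrow> int) set" where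
  "Zp p = {x. \<forall>n. 0 \<le> x n \<and> x n < int p ^ n \<and> x (Suc n) mod (int p ^ n) = x n}"

definition zp_of_int :: "nat \<Rightarrow> int \<Rightarrow> (nat \<Rightarrow> int)" where
  "zp_of_int p k = (\<lambda>n. k mod (int p ^ n))"

definition zp_add :: "nat \<Rightarrow> (nat \<Rightarrow> int) \<Rightarrow> (nat \<Rightarrow> int) \<Rightarrow> (nat \<Rightarrow> int)" where
  "zp_add p x y = (\<lambda>n. (x n + y n) mod (int p ^ n))"

definition zp_mult :: "nat \<Rightarrow> (nat \<Rightarrow> int) \<Rightarrow> (nat \<Rightarrow> int) \<Rightarrow> (nat \<Rightarrow> int)" where
  "zp_mult p x y = (\<lambda>n. (x n * y n) mod (int p ^ n))"

section \<open>Z_p^d: vectors indexed by {0..<d} (index i here corresponds to i+1 in the paper)\<close>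

definition Zpd :: "nat \<Rightarrow> nat \<Rightarrow> (nat \<Rightarrow> nat \<Rightarrow> int) set" where
  "Zpd p d = {x. (\<forall>i<d. x i \<in> Zp p) \<and> (\<forall>i\<ge>d. x i = zp_of_int p 0)}"

definition vadd :: "nat \<Rightarrow> (nat \<Rightarrow> nat \<Rightarrow> int) \<Rightarrow> (nat \<Rightarrow> nat \<Rightarrow> int) \<Rightarrow> (nat \<Rightarrow> nat \<Rightarrow> int)" where
  "vadd p x y = (\<lambda>i. zp_add p (x i) (y i))"

definition scaled_unit :: "nat \<Rightarrow> int \<Rightarrow> nat \<Rightarrow> (nat \<Rightarrow> nat \<Rightarrow> int)" where
  "scaled_unit p k i = (\<lambda>j. if j = i then zp_of_int p k else zp_of_int p 0)"

definition multi_indices :: "nat \<Rightarrow> (nat \<Rightarrow> nat) set" where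
  "multi_indices d = {n. \<forall>i\<ge>d. n i = 0}"

definition is_valuation_ring :: "('r::comm_ring_1 \<Rightarrow> ereal) \<Rightarrow> bool" where
  "is_valuation_ring v \<longleftrightarrow>
     (\<forall>x. v x \<noteq> -\<infinity>) \<and> (\<forall>x. v x = \<infinity> \<longleftrightarrow> x = 0) \<and>
     (\<forall>x y. v (x * y) \<ge> v x + v y) \<and> (\<forall>x y. v (x + y) \<ge> min (v x) (v y))"

definition is_valuation_module ::
  "('r::comm_ring_1 \<Rightarrow> 'm::ab_group_add \<Rightarrow> 'm) \<Rightarrow> ('r \<Rightarrow> ereal) \<Rightarrow> ('m \<Rightarrow> ereal) \<Rightarrow> bool" where
  "is_valuation_module sc vR vM \<longleftrightarrow>
     (\<forall>x. vM x \<noteq> -\<infinity>) \<and> (\<forall>x. vM x = \<infinity> \<longleftrightarrow> x = 0) \<and>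
     (\<forall>r m. vM (sc r m) \<ge> vR r + vM m) \<and> (\<forall>x y. vM (x + y) \<ge> min (vM x) (vM y))"

text \<open>Tate ring (for the valuation topology): there is a topologically nilpotent unit,
  i.e. a unit of positive valuation.\<close>
definition is_tate_valued :: "('r::comm_ring_1 \<Rightarrow> ereal) \<Rightarrow> bool" where
  "is_tate_valued v \<longleftrightarrow> (\<exists>w u. w * u = 1 \<and> v w > 0)"

definition zp_algebra_map :: "nat \<Rightarrow> ((nat \<Rightarrow> int) \<Rightarrow> 'r::comm_ring_1) \<Rightarrow> bool" where
  "zp_algebra_map p \<iota> \<longleftrightarrow>
     \<iota> (zp_of_int p 1) = 1 \<and>
     (\<forall>x\<in>Zp p. \<forall>y\<in>Zp p. \<iota> (zp_add p x y) = \<iota> x + \<iota> y \<and> \<iota> (zp_mult p x y) = \<iota> x * \<iota> y)"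

definition cont_Zpd :: "nat \<Rightarrow> nat \<Rightarrow> ('m::ab_group_add \<Rightarrow> ereal) \<Rightarrow> ((nat \<Rightarrow> nat \<Rightarrow> int) \<Rightarrow> 'm) \<Rightarrow> bool" where
  "cont_Zpd p d vM f \<longleftrightarrow>
     (\<forall>x\<in>Zpd p d. \<forall>N::real. \<exists>k::nat. \<forall>y\<in>Zpd p d.
        (\<forall>i<d. y i k = x i k) \<longrightarrow> vM (f y - f x) \<ge> ereal N)"

definition Delta :: "nat \<Rightarrow> (nat \<Rightarrow> nat \<Rightarrow> int) \<Rightarrow> ((nat \<Rightarrow> nat \<Rightarrow> int) \<Rightarrow> 'm::ab_group_add)
    \<Rightarrow> ((nat \<Rightarrow> nat \<Rightarrow> int) \<Rightarrow> 'm)" where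
  "Delta p y f = (\<lambda>x. f (vadd p x y) - f x)"

definition Delta_multi :: "nat \<Rightarrow> nat \<Rightarrow> (nat \<Rightarrow> nat)
    \<Rightarrow> ((nat \<Rightarrow> nat \<Rightarrow> int) \<Rightarrow> 'm::ab_group_add) \<Rightarrow> ((nat \<Rightarrow> nat \<Rightarrow> int) \<Rightarrow> 'm)" where
  "Delta_multi p d n = foldr (\<lambda>i acc. (Delta p (scaled_unit p 1 i) ^^ n i) \<circ> acc) [0..<d] id"

definition mahler_coeff :: "nat \<Rightarrow> nat \<Rightarrow> (nat \<Rightarrow> nat)
    \<Rightarrow> ((nat \<Rightarrow> nat \<Rightarrow> int) \<Rightarrow> 'm::ab_group_add) \<Rightarrow> 'm" where
  "mahler_coeff p d n f = Delta_multi p d n f (\<lambda>_. zp_of_int p 0)"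

definition lambda_an :: "nat \<Rightarrow> nat \<Rightarrow> ('m::ab_group_add \<Rightarrow> ereal) \<Rightarrow> real
    \<Rightarrow> ((nat \<Rightarrow> nat \<Rightarrow> int) \<Rightarrow> 'm) set" where
  "lambda_an p d vM lam = {f. cont_Zpd p d vM f \<and>
     (\<forall>B::real. \<exists>K::nat. \<forall>n\<in>multi_indices d. (\<Sum>i<d. n i) \<ge> K \<longrightarrow>
        vM (mahler_coeff p d n f) - ereal (real p powr lam * real (\<Sum>i<d. n i)) \<ge> ereal B)}"

definition val_lambda :: "nat \<Rightarrow> nat \<Rightarrow> ('m::ab_group_add \<Rightarrow> ereal) \<Rightarrow> real
    \<Rightarrow> ((nat \<Rightarrow> nat \<Rightarrow> int) \<Rightarrow> 'm) \<Rightarrow> ereal" where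
  "val_lambda p d vM lam f = (INF n\<in>multi_indices d.
      vM (mahler_coeff p d n f) - ereal (of_int (\<Sum>i<d. \<lfloor>real p powr lam * real (n i)\<rfloor>)))"

end

theory Submission
  imports Defs "HOL-Computational_Algebra.Primes"
begin

text \<open>
  Finite differences in different directions commute, and the binomial expansion
  f(x + N 1_i) = \<Sum>k C(N,k) \<Delta>_i^k f(x) then gives for the Mahler coefficients
  a_n(\<Delta>_{N 1_i} f) = \<Sum>_{1 \<le> m \<le> N} C(N,m) a_{n + m 1_i}(f).
  Shifting the index by m 1_i raises the weight \<lfloor>p^\<lambda> n\<rfloor> by at least \<lfloor>p^\<lambda> m\<rfloor>,
  which exceeds c for all but finitely many m. For N = p^l and these finitely many m,
  p^(l-m) divides C(p^l,m), so the factor C(p^l,m) itself raises the valuation by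
  (l - m) val(p) \<ge> c once l is large.
\<close>

lemma vadd_right_commute: "vadd p (vadd p x y) z = vadd p (vadd p x z) y"
  by (simp add: vadd_def zp_add_def fun_eq_iff mod_simps ac_simps)

lemma vadd_scaled_unit_add:
  "vadd p (vadd p x (scaled_unit p a i)) (scaled_unit p b i) = vadd p x (scaled_unit p (a + b) i)"
  unfolding vadd_def zp_add_def scaled_unit_def zp_of_int_def
  by (simp add: fun_eq_iff mod_add_left_eq add.assoc) (metis mod_add_eq mod_add_right_eq)

lemma Zp_mod_power:
  assumes "x \<in> Zp p" "m \<le> n"
  shows "x n mod (int p ^ m) = x m"
  using assms(2)
proof (induction n rule: dec_induct)
  case base
  have "0 \<le> x m" "x m < int p ^ m" using assms(1) by (auto simp: Zp_def)
  then show ?case by simp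
next
  case (step n)
  then have "x (Suc n) mod int p ^ m = (x (Suc n) mod int p ^ n) mod int p ^ m"
    by (simp add: mod_mod_cancel le_imp_power_dvd)
  with assms(1) step.IH show ?case by (simp add: Zp_def)
qed

lemma zp_add_of_int_Zp:
  assumes "x \<in> Zp p" "p > 0"
  shows "zp_add p x (zp_of_int p b) \<in> Zp p"
  unfolding Zp_def zp_add_def zp_of_int_def
proof (intro CollectI allI conjI)
  fix n
  show "0 \<le> (x n + b mod int p ^ n) mod int p ^ n" "(x n + b mod int p ^ n) mod int p ^ n < int p ^ n"
    using assms(2) by simp_all
  have dvd: "int p ^ n dvd int p ^ Suc n" by simp
  have "x (Suc n) mod int p ^ n = x n" using assms(1) by (simp add: Zp_def)
  then show "(x (Suc n) + b mod int p ^ Suc n) mod int p ^ Suc n mod int p ^ n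
      = (x n + b mod int p ^ n) mod int p ^ n"
    by (metis mod_mod_cancel[OF dvd] mod_add_eq)
qed

lemma vadd_scaled_unit_Zpd:
  assumes "x \<in> Zpd p d" "i < d" "p > 0"
  shows "vadd p x (scaled_unit p a i) \<in> Zpd p d"
proof -
  have "zp_add p (x j) (scaled_unit p a i j) \<in> Zp p" if "j < d" for j
    using assms that zp_add_of_int_Zp[of "x j" p] by (auto simp: Zpd_def scaled_unit_def)
  moreover have "zp_add p (x j) (scaled_unit p a i j) = zp_of_int p 0" if "j \<ge> d" for j
    using assms that by (auto simp: Zpd_def scaled_unit_def zp_add_def zp_of_int_def fun_eq_iff)
  ultimately show ?thesis by (simp add: Zpd_def vadd_def)
qed

section \<open>Commuting finite differences\<close>

lemma funpow_comp_commute: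
  assumes "g \<circ> h = h \<circ> g" shows "g ^^ k \<circ> h = h \<circ> g ^^ k"
proof (induction k)
  case (Suc k)
  have "g ^^ Suc k \<circ> h = g \<circ> (g ^^ k \<circ> h)" by (simp add: comp_assoc)
  also have "\<dots> = (g \<circ> h) \<circ> g ^^ k" by (simp only: Suc.IH comp_assoc)
  also have "\<dots> = h \<circ> g ^^ Suc k" by (simp only: assms comp_assoc funpow.simps(2))
  finally show ?case .
qed simp

lemma funpow_comp_funpow_commute:
  "g \<circ> h = h \<circ> g \<Longrightarrow> g ^^ a \<circ> h ^^ b = h ^^ b \<circ> g ^^ a"
  by (metis funpow_comp_commute)

lemma foldr_funpow_Cons:
  "foldr (\<lambda>j acc. D j ^^ n j \<circ> acc) (j # L) id = D j ^^ n j \<circ> foldr (\<lambda>j acc. D j ^^ n j \<circ> acc) L id"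
  by simp

lemma foldr_funpow_comp_commute:
  assumes "\<And>j. G \<circ> D j = D j \<circ> G"
  shows "G \<circ> foldr (\<lambda>j acc. D j ^^ n j \<circ> acc) L id = foldr (\<lambda>j acc. D j ^^ n j \<circ> acc) L id \<circ> G"
proof (induction L)
  case (Cons j L)
  have "G \<circ> D j ^^ n j = D j ^^ n j \<circ> G"
    using funpow_comp_commute[OF assms[symmetric]] by (rule sym)
  then show ?case
    by (simp only: foldr_funpow_Cons comp_assoc[symmetric]) (simp only: comp_assoc Cons.IH)
qed simp

lemma foldr_funpow_update:
  assumes commute: "\<And>j k. D j \<circ> D k = D k \<circ> D j" and "i \<in> set L" "distinct L"
  shows "foldr (\<lambda>j acc. D j ^^ (n(i := n i + k)) j \<circ> acc) L id
    = D i ^^ k \<circ> foldr (\<lambda>j acc. D j ^^ n j \<circ> acc) L id"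
  using assms(2,3)
proof (induction L)
  case (Cons j L)
  show ?case
  proof (cases "j = i")
    case True
    with Cons.prems have "foldr (\<lambda>j acc. D j ^^ (n(i := n i + k)) j \<circ> acc) L id
        = foldr (\<lambda>j acc. D j ^^ n j \<circ> acc) L id"
      by (intro foldr_cong) auto
    with True show ?thesis
      by (simp only: foldr_funpow_Cons fun_upd_same add.commute[of _ k] funpow_add comp_assoc)
  next
    case False
    with Cons.prems have IH: "foldr (\<lambda>j acc. D j ^^ (n(i := n i + k)) j \<circ> acc) L id
        = D i ^^ k \<circ> foldr (\<lambda>j acc. D j ^^ n j \<circ> acc) L id"
      by (intro Cons.IH) auto
    have swap: "D j ^^ n j \<circ> D i ^^ k = D i ^^ k \<circ> D j ^^ n j"
      using commute by (rule funpow_comp_funpow_commute)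
    show ?thesis
      by (simp only: foldr_funpow_Cons fun_upd_other[OF False] IH comp_assoc[symmetric] swap)
  qed
qed simp

lemma Delta_commute: "Delta p y \<circ> Delta p z = Delta p z \<circ> Delta p y"
  by (simp add: Delta_def fun_eq_iff vadd_right_commute[of p _ y z] algebra_simps)

lemma funpow_Delta_add:
  "(Delta p y ^^ k) (\<lambda>x. g x + h x) = (\<lambda>x. (Delta p y ^^ k) g x + (Delta p y ^^ k) h x)"
  by (induction k) (auto simp: Delta_def fun_eq_iff algebra_simps)

lemma Delta_multi_Delta_commute:
  "Delta_multi p d n (Delta p y f) = Delta p y (Delta_multi p d n f)"
proof -
  have "Delta p y \<circ> Delta_multi p d n = Delta_multi p d n \<circ> Delta p y"
    unfolding Delta_multi_def by (rule foldr_funpow_comp_commute) (rule Delta_commute)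
  then show ?thesis by (metis comp_apply)
qed

lemma Delta_multi_update:
  assumes "i < d"
  shows "Delta_multi p d (n(i := n i + k)) f = (Delta p (scaled_unit p 1 i) ^^ k) (Delta_multi p d n f)"
proof -
  have "Delta_multi p d (n(i := n i + k)) = Delta p (scaled_unit p 1 i) ^^ k \<circ> Delta_multi p d n"
    unfolding Delta_multi_def using assms by (intro foldr_funpow_update Delta_commute) auto
  then show ?thesis by (metis comp_apply)
qed

section \<open>Mahler coefficients of a translate difference\<close>

context module
begin

lemma sum_binomial_Pascal:
  "(\<Sum>k\<le>N. scale (of_nat (N choose k)) (u k + u (Suc k)))
    = (\<Sum>k\<le>Suc N. scale (of_nat (Suc N choose k)) (u k))"
proof -
  have shift: "(\<Sum>k\<le>N. scale (of_nat (N choose k)) (u k))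
      = u 0 + (\<Sum>k\<le>N. scale (of_nat (N choose Suc k)) (u (Suc k)))"
  proof -
    have "(\<Sum>k\<le>Suc N. scale (of_nat (N choose k)) (u k)) = (\<Sum>k\<le>N. scale (of_nat (N choose k)) (u k))"
      by (simp add: binomial_eq_0)
    moreover have "(\<Sum>k\<le>Suc N. scale (of_nat (N choose k)) (u k))
        = u 0 + (\<Sum>k\<le>N. scale (of_nat (N choose Suc k)) (u (Suc k)))"
      by (subst sum.atMost_Suc_shift) simp
    ultimately show ?thesis by simp
  qed
  have "(\<Sum>k\<le>Suc N. scale (of_nat (Suc N choose k)) (u k))
      = u 0 + (\<Sum>k\<le>N. scale (of_nat (Suc N choose Suc k)) (u (Suc k)))"
    by (subst sum.atMost_Suc_shift) simp
  also have "\<dots> = u 0 + (\<Sum>k\<le>N. scale (of_nat (N choose k)) (u (Suc k)))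
      + (\<Sum>k\<le>N. scale (of_nat (N choose Suc k)) (u (Suc k)))"
    by (simp add: scale_left_distrib sum.distrib add.assoc)
  also have "\<dots> = (\<Sum>k\<le>N. scale (of_nat (N choose k)) (u k + u (Suc k)))"
    by (simp add: shift scale_right_distrib sum.distrib ac_simps)
  finally show ?thesis by simp
qed

text \<open>Adding \<open>scaled_unit p 0 i\<close> reduces every coordinate modulo p^n, so the right-hand side
  is evaluated at a point that equals x only when x is normalised (e.g. x \<in> Zpd p d).\<close>

lemma translate_binomial_expansion:
  "g (vadd p x (scaled_unit p (int N) i)) = (\<Sum>k\<le>N. scale (of_nat (N choose k))
     ((Delta p (scaled_unit p 1 i) ^^ k) g (vadd p x (scaled_unit p 0 i))))"
proof (induction N arbitrary: g)
  case (Suc N)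
  let ?D = "Delta p (scaled_unit p 1 i)" and ?x0 = "vadd p x (scaled_unit p 0 i)"
  have "g (vadd p x (scaled_unit p (int (Suc N)) i))
      = (\<lambda>y. g y + ?D g y) (vadd p x (scaled_unit p (int N) i))"
    by (simp add: Delta_def vadd_scaled_unit_add add.commute)
  also have "\<dots> = (\<Sum>k\<le>N. scale (of_nat (N choose k)) ((?D ^^ k) g ?x0 + (?D ^^ Suc k) g ?x0))"
    by (simp only: Suc.IH funpow_Delta_add funpow_swap1 funpow.simps(2) o_apply
        scale_right_distrib sum.distrib)
  also have "\<dots> = (\<Sum>k\<le>Suc N. scale (of_nat (Suc N choose k)) ((?D ^^ k) g ?x0))"
    by (rule sum_binomial_Pascal)
  finally show ?case .
qed simp

lemma Delta_scaled_unit_at_zero: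
  "Delta p (scaled_unit p (int N) i) g (\<lambda>_. zp_of_int p 0) = (\<Sum>k<N.
     scale (of_nat (N choose Suc k)) ((Delta p (scaled_unit p 1 i) ^^ Suc k) g (\<lambda>_. zp_of_int p 0)))"
proof -
  have "vadd p (\<lambda>_. zp_of_int p 0) (scaled_unit p 0 i) = (\<lambda>_. zp_of_int p 0)"
    by (simp add: vadd_def zp_add_def scaled_unit_def zp_of_int_def fun_eq_iff)
  then show ?thesis
    using translate_binomial_expansion[of g p "\<lambda>_. zp_of_int p 0" N i]
    by (simp add: Delta_def sum.atMost_shift)
qed

lemma mahler_coeff_Delta_scaled_unit:
  assumes "i < d"
  shows "mahler_coeff p d n (Delta p (scaled_unit p (int N) i) f)
    = (\<Sum>k<N. scale (of_nat (N choose Suc k)) (mahler_coeff p d (n(i := n i + Suc k)) f))"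
  unfolding mahler_coeff_def Delta_multi_Delta_commute Delta_multi_update[OF assms]
  by (rule Delta_scaled_unit_at_zero)

end

lemma sum_update_add:
  fixes n :: "'a \<Rightarrow> 'b::comm_monoid_add"
  assumes "finite A" "i \<in> A"
  shows "sum (n(i := n i + m)) A = sum n A + m"
proof -
  have "sum (n(i := n i + m)) A = (\<Sum>j\<in>A. n j + (if j = i then m else 0))"
    by (rule sum.cong) auto
  with assms show ?thesis by (simp add: sum.distrib)
qed

lemma sum_floor_update_ge:
  assumes "finite A" "i \<in> A" "P \<ge> 0"
  shows "(\<Sum>j\<in>A. \<lfloor>P * real (n j)\<rfloor>) + \<lfloor>P * real m\<rfloor> \<le> (\<Sum>j\<in>A. \<lfloor>P * real ((n(i := n i + m)) j)\<rfloor>)"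
proof -
  have "(\<Sum>j\<in>A. \<lfloor>P * real (n j)\<rfloor>) + \<lfloor>P * real m\<rfloor>
      = (\<Sum>j\<in>A. \<lfloor>P * real (n j)\<rfloor> + (if j = i then \<lfloor>P * real m\<rfloor> else 0))"
    using assms by (simp add: sum.distrib)
  also have "\<dots> \<le> (\<Sum>j\<in>A. \<lfloor>P * real ((n(i := n i + m)) j)\<rfloor>)"
    using le_floor_add[of "P * real (n i)" "P * real m"] by (intro sum_mono) (simp add: distrib_left)
  finally show ?thesis .
qed

lemma prime_power_dvd_binomial:
  fixes p l k :: nat
  assumes "prime p" "1 \<le> k" "k \<le> p ^ l"
  shows "p ^ (l - k) dvd (p ^ l choose k)"
proof -
  have p1: "p > 1" using assms(1) prime_gt_1_nat by blast
  define a where "a = multiplicity p k"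
  obtain u where ku: "k = p ^ a * u" "\<not> p dvd u"
    using multiplicity_decompose'[of k p] assms(1,2) unfolding a_def by (metis not_one_le_zero not_prime_unit)
  have "p ^ a \<le> k" using assms(2) unfolding a_def by (intro dvd_imp_le multiplicity_dvd) simp
  then have "a < k" using power_gt_expt[of p a] p1 by linarith
  have "p ^ a \<le> p ^ l" using \<open>p ^ a \<le> k\<close> assms(3) by linarith
  then have "a \<le> l" using p1 by simp
  have "k * (p ^ l choose k) = p ^ l * ((p ^ l - 1) choose (k - 1))"
    using assms(2) times_binomial_minus1_eq by simp
  then have "p ^ a * p ^ (l - a) dvd p ^ a * (u * (p ^ l choose k))"
    using ku(1) \<open>a \<le> l\<close> by (metis dvd_triv_left mult.assoc le_add_diff_inverse power_add)
  then have "p ^ (l - a) dvd u * (p ^ l choose k)" using p1 by simp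
  moreover have "coprime (p ^ (l - a)) u" using ku(2) assms(1) by (simp add: prime_imp_coprime)
  ultimately have "p ^ (l - a) dvd (p ^ l choose k)" using coprime_dvd_mult_right_iff by blast
  moreover have "p ^ (l - k) dvd p ^ (l - a)" using \<open>a < k\<close> by (simp add: le_imp_power_dvd)
  ultimately show ?thesis by (meson dvd_trans)
qed

locale valued_module = module sc
  for sc :: "'r::comm_ring_1 \<Rightarrow> 'm::ab_group_add \<Rightarrow> 'm" +
  fixes valR :: "'r \<Rightarrow> ereal" and valM :: "'m \<Rightarrow> ereal"
  assumes valuation_ring: "is_valuation_ring valR"
    and valuation_module: "is_valuation_module sc valR valM"
begin

lemma val_zero [simp]: "valM 0 = \<infinity>"
  using valuation_module by (simp add: is_valuation_module_def)

lemma val_add_ge: "min (valM x) (valM y) \<le> valM (x + y)"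
  using valuation_module by (simp add: is_valuation_module_def)

lemma val_scale_ge: "valR r + valM x \<le> valM (sc r x)"
  using valuation_module by (simp add: is_valuation_module_def)

lemma val_uminus_ge: "valR (-1) + valM x \<le> valM (- x)"
  using val_scale_ge[of "-1" x] by simp

lemma val_sum_ge:
  assumes "finite S" "\<And>k. k \<in> S \<Longrightarrow> B \<le> valM (g k)"
  shows "B \<le> valM (sum g S)"
  using assms
proof (induction S rule: finite_induct)
  case (insert a S)
  then have "B \<le> min (valM (g a)) (valM (sum g S))" by auto
  also have "\<dots> \<le> valM (g a + sum g S)" by (rule val_add_ge)
  finally show ?case using insert by simp
qed simp

lemma val_scale_of_nat_ge: "valM x \<le> valM (sc (of_nat m) x)"
proof (induction m)
  case (Suc m)
  have "sc (of_nat (Suc m)) x = x + sc (of_nat m) x"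
    by (simp add: scale_left_distrib)
  with Suc show ?case using val_add_ge[of x "sc (of_nat m) x"] by (simp add: min_def split: if_splits)
qed simp

lemma val_scale_power_ge:
  assumes "ereal \<delta> \<le> valR r"
  shows "ereal (real j * \<delta>) + valM x \<le> valM (sc (r ^ j) x)"
proof (induction j)
  case (Suc j)
  have "ereal (real (Suc j) * \<delta>) + valM x = ereal \<delta> + (ereal (real j * \<delta>) + valM x)"
    by (simp add: distrib_right add.assoc[symmetric] add.commute)
  also have "\<dots> \<le> valR r + valM (sc (r ^ j) x)"
    by (rule add_mono[OF assms Suc.IH])
  also have "\<dots> \<le> valM (sc (r ^ Suc j) x)"
    using val_scale_ge[of r "sc (r ^ j) x"] by simp
  finally show ?case .
qed simp

lemma cont_Zpd_diff:
  assumes f: "cont_Zpd p d valM f" and g: "cont_Zpd p d valM g"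
  shows "cont_Zpd p d valM (\<lambda>x. f x - g x)"
  unfolding cont_Zpd_def
proof (intro ballI allI)
  fix x and N :: real
  assume x: "x \<in> Zpd p d"
  have "valR (-1) \<noteq> -\<infinity>" using valuation_ring by (simp add: is_valuation_ring_def)
  then obtain r where r: "ereal r \<le> valR (-1)" by (cases "valR (-1)") auto
  obtain k1 where k1: "\<forall>y\<in>Zpd p d. (\<forall>j<d. y j k1 = x j k1) \<longrightarrow> ereal N \<le> valM (f y - f x)"
    using f x unfolding cont_Zpd_def by blast
  obtain k2 where k2: "\<forall>y\<in>Zpd p d. (\<forall>j<d. y j k2 = x j k2) \<longrightarrow> ereal (N - r) \<le> valM (g y - g x)"
    using g x unfolding cont_Zpd_def by blast
  show "\<exists>k. \<forall>y\<in>Zpd p d. (\<forall>j<d. y j k = x j k) \<longrightarrow> ereal N \<le> valM (f y - g y - (f x - g x))"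
  proof (intro exI[of _ "max k1 k2"] ballI impI)
    fix y assume y: "y \<in> Zpd p d" and agree: "\<forall>j<d. y j (max k1 k2) = x j (max k1 k2)"
    have agree_below: "y j k = x j k" if "j < d" "k \<le> max k1 k2" for j k
      using x y that agree Zp_mod_power[of "y j" p k "max k1 k2"] Zp_mod_power[of "x j" p k "max k1 k2"]
      by (simp add: Zpd_def)
    then have f_close: "ereal N \<le> valM (f y - f x)" using k1 y by simp
    have "ereal r + ereal (N - r) \<le> valR (-1) + valM (g y - g x)"
      using k2 y agree_below r by (intro add_mono) simp_all
    then have g_close: "ereal N \<le> valM (- (g y - g x))"
      using val_uminus_ge[of "g y - g x"] by simp
    have "min (valM (f y - f x)) (valM (- (g y - g x))) \<le> valM (f y - g y - (f x - g x))"
      using val_add_ge[of "f y - f x" "- (g y - g x)"] by (simp add: algebra_simps)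
    with f_close g_close show "ereal N \<le> valM (f y - g y - (f x - g x))"
      by (meson min.boundedI order_trans)
  qed
qed

lemma cont_Zpd_translate:
  assumes "p > 0" "i < d" and f: "cont_Zpd p d valM f"
  shows "cont_Zpd p d valM (\<lambda>x. f (vadd p x (scaled_unit p a i)))"
  unfolding cont_Zpd_def
proof (intro ballI allI)
  fix x and N :: real
  assume x: "x \<in> Zpd p d"
  let ?s = "scaled_unit p a i"
  obtain k where k: "\<forall>y\<in>Zpd p d. (\<forall>j<d. y j k = vadd p x ?s j k) \<longrightarrow> ereal N \<le> valM (f y - f (vadd p x ?s))"
    using f vadd_scaled_unit_Zpd[OF x assms(2,1)] unfolding cont_Zpd_def by blast
  show "\<exists>k. \<forall>y\<in>Zpd p d. (\<forall>j<d. y j k = x j k) \<longrightarrow> ereal N \<le> valM (f (vadd p y ?s) - f (vadd p x ?s))"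
  proof (intro exI[of _ k] ballI impI)
    fix y assume "y \<in> Zpd p d" "\<forall>j<d. y j k = x j k"
    with k vadd_scaled_unit_Zpd[OF _ assms(2,1)] show "ereal N \<le> valM (f (vadd p y ?s) - f (vadd p x ?s))"
      by (simp add: vadd_def zp_add_def)
  qed
qed

lemma cont_Zpd_Delta_scaled_unit:
  assumes "p > 0" "i < d" and f: "cont_Zpd p d valM f"
  shows "cont_Zpd p d valM (Delta p (scaled_unit p a i) f)"
  unfolding Delta_def using cont_Zpd_diff[OF cont_Zpd_translate[OF assms] f] .

lemma lambda_an_Delta_scaled_unit:
  assumes "p > 0" "i < d" and f: "f \<in> lambda_an p d valM lam"
  shows "Delta p (scaled_unit p (int N) i) f \<in> lambda_an p d valM lam"
proof -
  define P where "P = real p powr lam"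
  let ?g = "Delta p (scaled_unit p (int N) i) f"
  have decay: "\<exists>K. \<forall>n\<in>multi_indices d. K \<le> (\<Sum>j<d. n j) \<longrightarrow>
      ereal B \<le> valM (mahler_coeff p d n ?g) - ereal (P * real (\<Sum>j<d. n j))" for B
  proof -
    obtain K where K: "\<forall>n\<in>multi_indices d. K \<le> (\<Sum>j<d. n j) \<longrightarrow>
        ereal B \<le> valM (mahler_coeff p d n f) - ereal (P * real (\<Sum>j<d. n j))"
      using f unfolding lambda_an_def P_def by blast
    have "ereal (B + P * real (\<Sum>j<d. n j)) \<le> valM (mahler_coeff p d n ?g)"
      if n: "n \<in> multi_indices d" "K \<le> (\<Sum>j<d. n j)" for n
      unfolding mahler_coeff_Delta_scaled_unit[OF assms(2)]
    proof (rule val_sum_ge[OF finite_lessThan])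
      fix k
      let ?n' = "n(i := n i + Suc k)"
      have sum_n': "(\<Sum>j<d. ?n' j) = (\<Sum>j<d. n j) + Suc k"
        using sum_update_add[of "{..<d}" i n "Suc k"] assms(2) by simp
      have "?n' \<in> multi_indices d" using n(1) assms(2) by (auto simp: multi_indices_def)
      moreover have "K \<le> (\<Sum>j<d. ?n' j)" using n(2) sum_n' by simp
      ultimately have "ereal B \<le> valM (mahler_coeff p d ?n' f) - ereal (P * real (\<Sum>j<d. ?n' j))"
        using K by blast
      then have "ereal (B + P * real (\<Sum>j<d. ?n' j)) \<le> valM (mahler_coeff p d ?n' f)"
        by (simp add: ereal_le_minus)
      moreover have "P * real (\<Sum>j<d. n j) \<le> P * real (\<Sum>j<d. ?n' j)"
        using sum_n' by (simp add: P_def mult_left_mono)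
      ultimately have "ereal (B + P * real (\<Sum>j<d. n j)) \<le> valM (mahler_coeff p d ?n' f)"
        by (meson add_left_mono ereal_less_eq(3) order_trans)
      also have "\<dots> \<le> valM (sc (of_nat (N choose Suc k)) (mahler_coeff p d ?n' f))"
        by (rule val_scale_of_nat_ge)
      finally show "ereal (B + P * real (\<Sum>j<d. n j))
          \<le> valM (sc (of_nat (N choose Suc k)) (mahler_coeff p d ?n' f))" .
    qed
    then show ?thesis by (auto simp: ereal_le_minus)
  qed
  moreover have "cont_Zpd p d valM ?g"
    using f assms(1,2) cont_Zpd_Delta_scaled_unit unfolding lambda_an_def by blast
  ultimately show ?thesis unfolding lambda_an_def P_def by blast
qed

lemma val_lambda_Delta_scaled_unit_ge:
  assumes "i < d"
    and binomial: "\<And>m x. 1 \<le> m \<Longrightarrow> m \<le> N \<Longrightarrow>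
      ereal (c - of_int \<lfloor>real p powr lam * real m\<rfloor>) + valM x \<le> valM (sc (of_nat (N choose m)) x)"
  shows "val_lambda p d valM lam f + ereal c
    \<le> val_lambda p d valM lam (Delta p (scaled_unit p (int N) i) f)"
  unfolding val_lambda_def[of p d valM lam "Delta p (scaled_unit p (int N) i) f"]
proof (rule INF_greatest)
  fix n assume n: "n \<in> multi_indices d"
  let ?V = "val_lambda p d valM lam f"
  define F where "F n = (\<Sum>j<d. \<lfloor>real p powr lam * real (n j)\<rfloor>)" for n
  have "?V + ereal c + ereal (of_int (F n)) \<le> valM (mahler_coeff p d n (Delta p (scaled_unit p (int N) i) f))"
    unfolding mahler_coeff_Delta_scaled_unit[OF assms(1)]
  proof (rule val_sum_ge[OF finite_lessThan])
    fix k assume "k \<in> {..<N}"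
    let ?n' = "n(i := n i + Suc k)" and ?fl = "\<lfloor>real p powr lam * real (Suc k)\<rfloor>"
    have "?n' \<in> multi_indices d" using n assms(1) by (auto simp: multi_indices_def)
    then have "?V \<le> valM (mahler_coeff p d ?n' f) - ereal (of_int (F ?n'))"
      unfolding val_lambda_def F_def by (rule INF_lower)
    then have coeff: "?V + ereal (of_int (F ?n')) \<le> valM (mahler_coeff p d ?n' f)"
      by (simp add: ereal_le_minus)
    have "F n + ?fl \<le> F ?n'"
      unfolding F_def using assms(1) by (intro sum_floor_update_ge) simp_all
    have "?V + ereal c + ereal (of_int (F n)) = ?V + (ereal (c - of_int ?fl) + ereal (of_int (F n + ?fl)))"
      by (simp add: add.assoc)
    also have "\<dots> = ereal (c - of_int ?fl) + (?V + ereal (of_int (F n + ?fl)))"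
      by (rule add.left_commute)
    also have "\<dots> \<le> ereal (c - of_int ?fl) + (?V + ereal (of_int (F ?n')))"
      using \<open>F n + ?fl \<le> F ?n'\<close> by (intro add_left_mono) simp
    also have "\<dots> \<le> ereal (c - of_int ?fl) + valM (mahler_coeff p d ?n' f)"
      using coeff by (rule add_left_mono)
    also have "\<dots> \<le> valM (sc (of_nat (N choose Suc k)) (mahler_coeff p d ?n' f))"
      using \<open>k \<in> {..<N}\<close> by (intro binomial) simp_all
    finally show "?V + ereal c + ereal (of_int (F n))
        \<le> valM (sc (of_nat (N choose Suc k)) (mahler_coeff p d ?n' f))" .
  qed
  then show "?V + ereal c \<le> valM (mahler_coeff p d n (Delta p (scaled_unit p (int N) i) f))
      - ereal (of_int (\<Sum>j<d. \<lfloor>real p powr lam * real (n j)\<rfloor>))"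
    unfolding F_def by (simp add: ereal_le_minus)
qed

lemma val_scale_binomial_prime_power_ge:
  assumes "prime p" "valR (of_nat p) > 0" "P > 0"
  shows "\<exists>l. \<forall>m x. 1 \<le> m \<longrightarrow> m \<le> p ^ l \<longrightarrow>
    ereal (c - of_int \<lfloor>P * real m\<rfloor>) + valM x \<le> valM (sc (of_nat (p ^ l choose m)) x)"
proof -
  obtain \<delta> where \<delta>: "0 < \<delta>" "ereal \<delta> \<le> valR (of_nat p)"
    using ereal_dense2[OF assms(2)] by (auto simp: less_imp_le)
  define K where "K = nat \<lceil>(c + 1) / P\<rceil>"
  define l where "l = K + nat \<lceil>c / \<delta>\<rceil>"
  have "ereal (c - of_int \<lfloor>P * real m\<rfloor>) + valM x \<le> valM (sc (of_nat (p ^ l choose m)) x)"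
    if m: "1 \<le> m" "m \<le> p ^ l" for m x
  proof (cases "m < K")
    case True
    obtain q where q: "p ^ l choose m = p ^ (l - m) * q"
      using prime_power_dvd_binomial[OF assms(1) m] by (elim dvdE)
    have "c / \<delta> \<le> real (l - m)" using True unfolding l_def by linarith
    then have "c \<le> real (l - m) * \<delta>" using \<delta>(1) by (simp add: field_simps)
    moreover have "0 \<le> \<lfloor>P * real m\<rfloor>" using assms(3) by simp
    ultimately have gap: "c - of_int \<lfloor>P * real m\<rfloor> \<le> real (l - m) * \<delta>" by linarith
    have "ereal (c - of_int \<lfloor>P * real m\<rfloor>) + valM x
        \<le> ereal (real (l - m) * \<delta>) + valM (sc (of_nat q) x)"
      by (intro add_mono val_scale_of_nat_ge) (simp add: gap)
    also have "\<dots> \<le> valM (sc (of_nat p ^ (l - m)) (sc (of_nat q) x))"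
      by (rule val_scale_power_ge[OF \<delta>(2)])
    also have "\<dots> = valM (sc (of_nat (p ^ l choose m)) x)"
      by (simp add: q)
    finally show ?thesis .
  next
    case False
    then have "(c + 1) / P \<le> real m" unfolding K_def by linarith
    then have "c + 1 \<le> P * real m" using assms(3) by (simp add: field_simps)
    then have "c - of_int \<lfloor>P * real m\<rfloor> \<le> 0" by linarith
    then have "ereal (c - of_int \<lfloor>P * real m\<rfloor>) + valM x \<le> 0 + valM x"
      by (intro add_right_mono) simp
    also have "\<dots> \<le> valM (sc (of_nat (p ^ l choose m)) x)"
      using val_scale_of_nat_ge by simp
    finally show ?thesis .
  qed
  then show ?thesis by blast
qed

end

theorem lemma2p6:
  fixes p d :: nat and lam c :: real
    and valR :: "'r::comm_ring_1 \<Rightarrow> ereal" and \<iota> :: "(nat \<Rightarrow> int) \<Rightarrow> 'r"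
    and sc :: "'r \<Rightarrow> 'm::ab_group_add \<Rightarrow> 'm" and valM :: "'m \<Rightarrow> ereal"
  assumes "prime p"
    and "zp_algebra_map p \<iota>"
    and "is_valuation_ring valR" and "is_tate_valued valR" and "valR (of_nat p) > 0"
    and "module sc" and "is_valuation_module sc valR valM"
    and "c > 0"
  shows "\<exists>l::nat. \<forall>f\<in>lambda_an p d valM lam. \<forall>i<d.
           Delta p (scaled_unit p (int p ^ l) i) f \<in> lambda_an p d valM lam \<and>
           val_lambda p d valM lam (Delta p (scaled_unit p (int p ^ l) i) f)
             \<ge> val_lambda p d valM lam f + ereal c"
proof -
  interpret valued_module sc valR valM
    using assms(3,6,7) by (simp add: valued_module_def valued_module_axioms_def)
  have "p > 0" using assms(1) prime_gt_0_nat by blast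
  obtain l where l: "\<And>m x. 1 \<le> m \<Longrightarrow> m \<le> p ^ l \<Longrightarrow> ereal (c - of_int \<lfloor>real p powr lam * real m\<rfloor>)
      + valM x \<le> valM (sc (of_nat (p ^ l choose m)) x)"
    using val_scale_binomial_prime_power_ge[OF assms(1,5), of "real p powr lam" c] \<open>p > 0\<close> by auto
  show ?thesis
  proof (intro exI[of _ l] ballI allI impI conjI)
    fix f i assume f: "f \<in> lambda_an p d valM lam" and i: "i < d"
    show "Delta p (scaled_unit p (int p ^ l) i) f \<in> lambda_an p d valM lam"
      using lambda_an_Delta_scaled_unit[OF \<open>p > 0\<close> i f, of "p ^ l"] by simp
    show "val_lambda p d valM lam f + ereal c
        \<le> val_lambda p d valM lam (Delta p (scaled_unit p (int p ^ l) i) f)"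
      using val_lambda_Delta_scaled_unit_ge[OF i l, of f] by simp
  qed
qed

end
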